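(* Assume the setting in the context, with a decomposition of $\mathcal X$ over $A$, $g\in\mathcal G_s$, an integer $T>0$, and $$\operatorname*{argmin}_{u\in\mathcal U} J^*_{t+1}(Ax+Bu)\cap\Big[\bigoplus_{i\in\mathcal I}\mathcal E_i\Big]\neq\emptyset\quad\text{for all }x\in\mathcal X,\ t\in\{0,\dots,T-1\}.$$ Then for every $t\in\{0,\dots,T\}$ and every $i\in\mathcal I$, the restriction of $J^*_t$ to $\mathcal X_i$ equals $\bar J^*_{i,t}$, i.e. $J^*_t(z)=\bar J^*_{i,t}(z)$ for all $z\in\mathcal X_i$.
   Context: Let $\mathcal F$ be a field and $\mathcal X,\mathcal U$ finite-dimensional vector spaces over $\mathcal F$. Let $A:\mathcal X\to\mathcal X$ and $B:\mathcal U\to\mathcal X$ be linear maps with $B$ injective, and let $g:\mathcal X\to\mathbb R_{\ge0}$ satisfy $g(x)=0\iff x=0$. Standing assumption: all minima appearing below are attained. For the finite-horizon problem $(A,B,g,T)$ associated with $x_{t+1}=Ax_t+Bu_t$, the cost-to-go functions are $J^*_T=g$ and $J^*_t(x)=g(x)+\min_{u\in\mathcal U}J^*_{t+1}(Ax+Bu)$ for $t=0,\dots,T-1$. A decomposition of $\mathcal X$ over $A$ is a direct sum $\mathcal X=\mathcal X_1\oplus\cdots\oplus\mathcal X_r$ with $r>1$ and $A\mathcal X_i\subseteq\mathcal X_i$ for all $i\in\mathcal I=\{1,\dots,r\}$; $\rho_i:\mathcal X\to\mathcal X_i$ is the projection along the other summands. $\mathcal G_s$ is the set of $h:\mathcal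 X\to\mathbb R_{\ge0}$ with $h(x)=\sum_i h(\rho_i(x))$ for all $x$. $\mathcal E_i=\{u\in\mathcal U:Bu\in\mathcal X_i\}$. For the subproblem $(A,B|_{\mathcal E_i},g,T)$ (system $x_{i,t+1}=Ax_{i,t}+B\bar u_{i,t}$, states in $\mathcal X_i$, inputs in $\mathcal E_i$), the cost-to-go functions $\bar J^*_{i,t}:\mathcal X_i\to\mathbb R_{\ge0}$ are $\bar J^*_{i,T}=g|_{\mathcal X_i}$ and $\bar J^*_{i,t}(z)=g(z)+\min_{u\in\mathcal E_i}\bar J^*_{i,t+1}(Az+Bu)$ for $t=0,\dots,T-1$. *)

theory Defs
  imports Complex_Main
begin

abbreviation idx :: "nat \<Rightarrow> nat set" where "idx r \<equiv> {1..r}"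

definition is_decomposition ::
  "('f::field \<Rightarrow> 'x::ab_group_add \<Rightarrow> 'x) \<Rightarrow> ('x \<Rightarrow> 'x) \<Rightarrow> nat \<Rightarrow> (nat \<Rightarrow> 'x set) \<Rightarrow> bool" where
  "is_decomposition scaleX A r Xs \<longleftrightarrow>
     r > 1 \<and>
     (\<forall>i\<in>idx r. module.subspace scaleX (Xs i) \<and> A ` Xs i \<subseteq> Xs i) \<and>
     (\<forall>x. \<exists>!f. (\<forall>i\<in>idx r. f i \<in> Xs i) \<and> (\<forall>i. i \<notin> idx r \<longrightarrow> f i = 0) \<and>
              x = (\<Sum>i\<in>idx r. f i))"

definition proj :: "nat \<Rightarrow> (nat \<Rightarrow> 'x::ab_group_add set) \<Rightarrow> nat \<Rightarrow> 'x \<Rightarrow> 'x" where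
  "proj r Xs i x = (THE f. (\<forall>j\<in>idx r. f j \<in> Xs j) \<and> (\<forall>j. j \<notin> idx r \<longrightarrow> f j = 0) \<and>
              x = (\<Sum>j\<in>idx r. f j)) i"

definition G_s :: "nat \<Rightarrow> (nat \<Rightarrow> 'x::ab_group_add set) \<Rightarrow> ('x \<Rightarrow> real) set" where
  "G_s r Xs = {h. (\<forall>x. h x \<ge> 0) \<and> (\<forall>x. h x = (\<Sum>i\<in>idx r. h (proj r Xs i x)))}"

definition Eset :: "('u \<Rightarrow> 'x) \<Rightarrow> 'x set \<Rightarrow> 'u set" where
  "Eset B Xi = {u. B u \<in> Xi}"

text \<open>Cost-to-go with k steps to go and input set Us:
  V_0 = g, V_{k+1}(x) = g x + min_{u in Us} V_k(A x + B u)
  (min written as Inf; attainment is assumed separately).\<close>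
fun ctg :: "('x::plus \<Rightarrow> 'x) \<Rightarrow> ('u \<Rightarrow> 'x) \<Rightarrow> ('x \<Rightarrow> real) \<Rightarrow> 'u set \<Rightarrow> nat \<Rightarrow> 'x \<Rightarrow> real" where
  "ctg A B g Us 0 x = g x"
| "ctg A B g Us (Suc k) x = g x + (INF u\<in>Us. ctg A B g Us k (A x + B u))"

definition Jstar :: "('x::plus \<Rightarrow> 'x) \<Rightarrow> ('u \<Rightarrow> 'x) \<Rightarrow> ('x \<Rightarrow> real) \<Rightarrow> nat \<Rightarrow> nat \<Rightarrow> 'x \<Rightarrow> real" where
  "Jstar A B g T t = ctg A B g UNIV (T - t)"

text \<open>Bar J*_{i,t} for the subproblem (A, B restricted to E_i, g, T); meaningful on X_i.\<close>
definition Jbar :: "('x::plus \<Rightarrow> 'x) \<Rightarrow> ('u \<Rightarrow> 'x) \<Rightarrow> ('x \<Rightarrow> real) \<Rightarrow> 'x set \<Rightarrow> nat \<Rightarrow> nat \<Rightarrow> 'x \<Rightarrow> real" where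
  "Jbar A B g Xi T t = ctg A B g (Eset B Xi) (T - t)"

end

theory Submission
  imports Defs
begin

text \<open>
  Write \<open>V k = ctg A B g UNIV k\<close> for the cost-to-go with \<open>k\<close> steps left and
  \<open>W j k = ctg A B g (E j) k\<close> for that of the \<open>j\<close>-th subproblem, \<open>E j = Eset B (X j)\<close>.
  We show by induction on \<open>k\<close> that the full cost-to-go is separable along the
  decomposition:  \<open>V k y = (\<Sum>j. W j k (\<rho> j y))\<close>.  The base case is \<open>g \<in> G_s\<close>.  In the
  step, the hypothesis supplies a minimiser \<open>u = \<Sum>j. f j\<close> with \<open>f j \<in> E j\<close>; since every
  \<open>X j\<close> is \<open>A\<close>-invariant, the \<open>j\<close>-th component of \<open>A x + B u\<close> is \<open>A (\<rho> j x) + B (f j)\<close>,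
  so the minimum of \<open>V k\<close> is a sum of one term per subproblem.  Comparing with the
  subproblem minimisers \<open>w j\<close> (whose sum is another admissible input) shows that the
  two minima coincide, which gives the separation at \<open>k + 1\<close>.  Finally, for \<open>z \<in> X i\<close>
  all components but the \<open>i\<close>-th vanish and \<open>W j k 0 = 0\<close>, so \<open>V k z = W i k z\<close>.
\<close>

section \<open>Cost-to-go functions\<close>

lemma ctg_nonneg:
  assumes "\<forall>x. g x \<ge> 0" and "Us \<noteq> {}"
  shows "ctg A B g Us k x \<ge> 0"
proof (induction k arbitrary: x)
  case 0
  then show ?case using assms by simp
next
  case (Suc k)
  have "(INF u\<in>Us. ctg A B g Us k (A x + B u)) \<ge> 0"
    using assms(2) Suc by (intro cINF_greatest) auto
  then show ?case using assms(1) by simp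
qed

lemma ctg_Suc_attained:
  assumes "u \<in> Us" and "\<forall>v\<in>Us. ctg A B g Us k (A x + B u) \<le> ctg A B g Us k (A x + B v)"
  shows "ctg A B g Us (Suc k) x = g x + ctg A B g Us k (A x + B u)"
proof -
  have "(INF v\<in>Us. ctg A B g Us k (A x + B v)) = ctg A B g Us k (A x + B u)"
    unfolding image_image[symmetric, of "ctg A B g Us k" "\<lambda>v. A x + B v"]
    using assms by (intro cInf_eq_minimum) auto
  then show ?thesis by simp
qed

lemma ctg_zero:
  fixes A :: "'x::monoid_add \<Rightarrow> 'x"
  assumes "\<forall>x. g x \<ge> 0" and "g 0 = 0" and "A 0 = 0" and "B 0 = 0" and "0 \<in> Us"
  shows "ctg A B g Us k 0 = 0"
proof (induction k)
  case 0
  then show ?case using assms by simp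
next
  case (Suc k)
  have "Us \<noteq> {}" using assms(5) by blast
  then have "\<forall>v\<in>Us. ctg A B g Us k (A 0 + B 0) \<le> ctg A B g Us k (A 0 + B v)"
    using Suc assms ctg_nonneg[OF assms(1) \<open>Us \<noteq> {}\<close>] by simp
  then have "ctg A B g Us (Suc k) 0 = g 0 + ctg A B g Us k (A 0 + B 0)"
    by (rule ctg_Suc_attained[OF assms(5)])
  then show ?case using Suc assms by simp
qed

section \<open>Projections of an invariant direct decomposition\<close>

locale invariant_decomposition =
  fixes scaleX :: "'f::field \<Rightarrow> 'x::ab_group_add \<Rightarrow> 'x"
    and scaleU :: "'f \<Rightarrow> 'u::ab_group_add \<Rightarrow> 'u"
    and A :: "'x \<Rightarrow> 'x" and B :: "'u \<Rightarrow> 'x"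
    and r :: nat and Xs :: "nat \<Rightarrow> 'x set"
  assumes linA: "Vector_Spaces.linear scaleX scaleX A"
    and linB: "Vector_Spaces.linear scaleU scaleX B"
    and dec: "is_decomposition scaleX A r Xs"
begin

abbreviation "I \<equiv> idx r"
abbreviation "\<rho> \<equiv> proj r Xs"
abbreviation "E j \<equiv> Eset B (Xs j)"

lemma homA: "module_hom scaleX scaleX A"
  using linA by (simp add: linear_iff_module_hom)

lemma homB: "module_hom scaleU scaleX B"
  using linB by (simp add: linear_iff_module_hom)

lemma summand_subspace: "j \<in> I \<Longrightarrow> module.subspace scaleX (Xs j)"
  using dec by (simp add: is_decomposition_def)

lemma summand_invariant: "j \<in> I \<Longrightarrow> x \<in> Xs j \<Longrightarrow> A x \<in> Xs j"
  using dec unfolding is_decomposition_def by blast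

lemma zero_in_summand: "j \<in> I \<Longrightarrow> 0 \<in> Xs j"
  using summand_subspace module.subspace_0[OF module_hom.axioms(1)[OF homA]] by blast

lemma zero_input_admissible: "j \<in> I \<Longrightarrow> 0 \<in> E j"
  using zero_in_summand module_hom.zero[OF homB] by (simp add: Eset_def)

lemma step_in_summand:
  assumes "j \<in> I" "z \<in> Xs j" "u \<in> E j"
  shows "A z + B u \<in> Xs j"
  using assms summand_invariant summand_subspace
    module.subspace_add[OF module_hom.axioms(1)[OF homA]]
  by (simp add: Eset_def)

lemma proj_decomposes: "(\<forall>j\<in>I. \<rho> j x \<in> Xs j) \<and> x = (\<Sum>j\<in>I. \<rho> j x)"
proof -
  let ?P = "\<lambda>f. (\<forall>j\<in>I. f j \<in> Xs j) \<and> (\<forall>j. j \<notin> I \<longrightarrow> f j = 0) \<and> x = (\<Sum>j\<in>I. f j)"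
  have "\<exists>!f. ?P f" using dec by (simp add: is_decomposition_def)
  then have "?P (THE f. ?P f)" by (rule theI')
  then show ?thesis by (simp add: proj_def)
qed

lemma proj_mem: "j \<in> I \<Longrightarrow> \<rho> j x \<in> Xs j"
  using proj_decomposes by blast

lemma sum_proj: "(\<Sum>j\<in>I. \<rho> j x) = x"
  using conjunct2[OF proj_decomposes] by (rule sym)

lemma proj_unique:
  assumes "\<forall>j\<in>I. f j \<in> Xs j" and "x = (\<Sum>j\<in>I. f j)" and "i \<in> I"
  shows "\<rho> i x = f i"
proof -
  let ?P = "\<lambda>f. (\<forall>j\<in>I. f j \<in> Xs j) \<and> (\<forall>j. j \<notin> I \<longrightarrow> f j = 0) \<and> x = (\<Sum>j\<in>I. f j)"
  define f' where "f' j = (if j \<in> I then f j else 0)" for j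
  have unique: "\<exists>!f. ?P f" using dec by (simp add: is_decomposition_def)
  have "?P f'" using assms by (simp add: f'_def)
  then have "(THE f. ?P f) = f'" by (rule the1_equality[OF unique])
  then show ?thesis using assms(3) by (simp add: proj_def f'_def)
qed

lemma proj_of_summand:
  assumes "i \<in> I" "j \<in> I" "z \<in> Xs i"
  shows "\<rho> j z = (if j = i then z else 0)"
  using assms zero_in_summand
  by (intro proj_unique) (auto simp: sum.delta)

text \<open>Since the summands are \<open>A\<close>-invariant, one step of the full system with an input
  \<open>\<Sum>j. w j\<close>, \<open>w j \<in> E j\<close>, acts componentwise as the subsystems do.\<close>
lemma proj_step:
  assumes "\<forall>j\<in>I. w j \<in> E j" and "i \<in> I"
  shows "\<rho> i (A x + B (\<Sum>j\<in>I. w j)) = A (\<rho> i x) + B (w i)"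
proof (rule proj_unique[OF _ _ assms(2)])
  show "\<forall>j\<in>I. A (\<rho> j x) + B (w j) \<in> Xs j"
    using assms(1) proj_mem step_in_summand by blast
  have "A x = A (\<Sum>j\<in>I. \<rho> j x)"
    by (simp only: sum_proj)
  also have "\<dots> = (\<Sum>j\<in>I. A (\<rho> j x))"
    by (rule module_hom.sum[OF homA])
  finally have "A x = (\<Sum>j\<in>I. A (\<rho> j x))" .
  then show "A x + B (\<Sum>j\<in>I. w j) = (\<Sum>j\<in>I. A (\<rho> j x) + B (w j))"
    by (simp add: module_hom.sum[OF homB] sum.distrib)
qed

end

section \<open>Separation of the cost-to-go along the decomposition\<close>

locale separable_problem = invariant_decomposition +
  fixes g :: "_ \<Rightarrow> real"
  assumes g_sep: "g \<in> G_s r Xs" and g_zero: "g 0 = 0"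
begin

abbreviation "V \<equiv> ctg A B g UNIV"
abbreviation "W j \<equiv> ctg A B g (E j)"

lemma g_nonneg: "\<forall>x. g x \<ge> 0"
  using g_sep unfolding G_s_def by blast

lemma g_separable: "g x = (\<Sum>j\<in>I. g (\<rho> j x))"
  using g_sep unfolding G_s_def by blast

lemma W_zero: "j \<in> I \<Longrightarrow> W j k 0 = 0"
  using g_nonneg g_zero module_hom.zero[OF homA] module_hom.zero[OF homB]
    zero_input_admissible
  by (intro ctg_zero) auto

definition structured_inputs where
  "structured_inputs = {\<Sum>j\<in>I. f j | f. \<forall>j\<in>I. f j \<in> E j}"

lemma separable_step:
  assumes sep: "\<forall>y. V k y = (\<Sum>j\<in>I. W j k (\<rho> j y))"
    and u: "u \<in> structured_inputs" "\<forall>v. V k (A x + B u) \<le> V k (A x + B v)"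
    and w: "\<forall>j\<in>I. w j \<in> E j \<and> (\<forall>v\<in>E j. W j k (A (\<rho> j x) + B (w j)) \<le> W j k (A (\<rho> j x) + B v))"
  shows "V (Suc k) x = (\<Sum>j\<in>I. W j (Suc k) (\<rho> j x))"
proof -
  have split: "V k (A x + B (\<Sum>j\<in>I. f j)) = (\<Sum>j\<in>I. W j k (A (\<rho> j x) + B (f j)))"
    if "\<forall>j\<in>I. f j \<in> E j" for f
    using sep proj_step[OF that] by simp
  obtain f where f: "\<forall>j\<in>I. f j \<in> E j" and u_eq: "u = (\<Sum>j\<in>I. f j)"
    using u(1) by (auto simp: structured_inputs_def)
  have "V k (A x + B u) \<le> V k (A x + B (\<Sum>j\<in>I. w j))"
    using u(2) by blast
  also have "\<dots> = (\<Sum>j\<in>I. W j k (A (\<rho> j x) + B (w j)))"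
    using split w by blast
  finally have "V k (A x + B u) \<le> (\<Sum>j\<in>I. W j k (A (\<rho> j x) + B (w j)))" .
  moreover have "(\<Sum>j\<in>I. W j k (A (\<rho> j x) + B (w j))) \<le> V k (A x + B u)"
    unfolding u_eq split[OF f] using w f by (intro sum_mono) blast
  ultimately have min_sep: "V k (A x + B u) = (\<Sum>j\<in>I. W j k (A (\<rho> j x) + B (w j)))"
    by linarith
  have "V (Suc k) x = g x + V k (A x + B u)"
    using u(2) by (intro ctg_Suc_attained) auto
  also have "\<dots> = (\<Sum>j\<in>I. g (\<rho> j x) + W j k (A (\<rho> j x) + B (w j)))"
    by (subst g_separable) (simp add: min_sep sum.distrib)
  also have "\<dots> = (\<Sum>j\<in>I. W j (Suc k) (\<rho> j x))"
    using w by (intro sum.cong refl ctg_Suc_attained[symmetric]) auto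
  finally show ?thesis .
qed

lemma separable:
  assumes attV: "\<forall>k<K. \<forall>x. \<exists>u\<in>structured_inputs. \<forall>v. V k (A x + B u) \<le> V k (A x + B v)"
    and attW: "\<forall>k<K. \<forall>j\<in>I. \<forall>z\<in>Xs j. \<exists>u\<in>E j. \<forall>v\<in>E j. W j k (A z + B u) \<le> W j k (A z + B v)"
    and "k \<le> K"
  shows "V k y = (\<Sum>j\<in>I. W j k (\<rho> j y))"
  using \<open>k \<le> K\<close>
proof (induction k arbitrary: y)
  case 0
  show ?case unfolding ctg.simps by (rule g_separable)
next
  case (Suc k)
  then have "k < K" by simp
  obtain u where "u \<in> structured_inputs" "\<forall>v. V k (A y + B u) \<le> V k (A y + B v)"
    using attV \<open>k < K\<close> by blast
  moreover have "\<forall>j\<in>I. \<exists>w\<in>E j. \<forall>v\<in>E j. W j k (A (\<rho> j y) + B w) \<le> W j k (A (\<rho> j y) + B v)"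
    using attW \<open>k < K\<close> proj_mem by blast
  then obtain w where
    "\<forall>j\<in>I. w j \<in> E j \<and> (\<forall>v\<in>E j. W j k (A (\<rho> j y) + B (w j)) \<le> W j k (A (\<rho> j y) + B v))"
    by (metis bchoice)
  ultimately show ?case
    using Suc by (intro separable_step) auto
qed

lemma restriction:
  assumes attV: "\<forall>k<K. \<forall>x. \<exists>u\<in>structured_inputs. \<forall>v. V k (A x + B u) \<le> V k (A x + B v)"
    and attW: "\<forall>k<K. \<forall>j\<in>I. \<forall>z\<in>Xs j. \<exists>u\<in>E j. \<forall>v\<in>E j. W j k (A z + B u) \<le> W j k (A z + B v)"
    and "k \<le> K" "i \<in> I" "z \<in> Xs i"
  shows "V k z = W i k z"
proof -
  have "V k z = (\<Sum>j\<in>I. W j k (\<rho> j z))"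
    using separable[OF attV attW \<open>k \<le> K\<close>] .
  also have "\<dots> = (\<Sum>j\<in>I. if j = i then W i k z else 0)"
    using proj_of_summand[OF \<open>i \<in> I\<close> _ \<open>z \<in> Xs i\<close>] W_zero by (intro sum.cong) auto
  also have "\<dots> = W i k z"
    using \<open>i \<in> I\<close> by simp
  finally show ?thesis .
qed

end

theorem proposition3:
  fixes scaleX :: "'f::field \<Rightarrow> 'x::ab_group_add \<Rightarrow> 'x"
    and scaleU :: "'f \<Rightarrow> 'u::ab_group_add \<Rightarrow> 'u"
    and A :: "'x \<Rightarrow> 'x" and B :: "'u \<Rightarrow> 'x" and g :: "'x \<Rightarrow> real"
    and r :: nat and Xs :: "nat \<Rightarrow> 'x set" and T :: nat
  assumes vsX: "vector_space scaleX"
    and vsU: "vector_space scaleU"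
    and fdX: "\<exists>S. finite S \<and> module.span scaleX S = UNIV"
    and fdU: "\<exists>S. finite S \<and> module.span scaleU S = UNIV"
    and linA: "Vector_Spaces.linear scaleX scaleX A"
    and linB: "Vector_Spaces.linear scaleU scaleX B"
    and injB: "inj B"
    and g_nonneg: "\<forall>x. g x \<ge> 0"
    and g_zero: "\<forall>x. g x = 0 \<longleftrightarrow> x = 0"
    and dec: "is_decomposition scaleX A r Xs"
    and gGs: "g \<in> G_s r Xs"
    and Tpos: "T > 0"
    and attJ: "\<forall>t<T. \<forall>x. \<exists>u. \<forall>v. Jstar A B g T (Suc t) (A x + B u) \<le> Jstar A B g T (Suc t) (A x + B v)"
    and attJbar: "\<forall>i\<in>idx r. \<forall>t<T. \<forall>z\<in>Xs i. \<exists>u\<in>Eset B (Xs i). \<forall>v\<in>Eset B (Xs i).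
                    Jbar A B g (Xs i) T (Suc t) (A z + B u) \<le> Jbar A B g (Xs i) T (Suc t) (A z + B v)"
    and hyp: "\<forall>x. \<forall>t<T. {u. \<forall>v. Jstar A B g T (Suc t) (A x + B u) \<le> Jstar A B g T (Suc t) (A x + B v)}
                 \<inter> {\<Sum>i\<in>idx r. f i | f. \<forall>i\<in>idx r. f i \<in> Eset B (Xs i)} \<noteq> {}"
  shows "\<forall>t\<le>T. \<forall>i\<in>idx r. \<forall>z\<in>Xs i. Jstar A B g T t z = Jbar A B g (Xs i) T t z"
proof -
  interpret separable_problem scaleX scaleU A B r Xs g
    using linA linB dec gGs g_zero
    by (intro separable_problem.intro invariant_decomposition.intro separable_problem_axioms.intro)
      auto
  text \<open>With \<open>k = T - (t + 1)\<close> steps to go, the hypotheses become attainment statements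
    for \<open>V k\<close> and \<open>W j k\<close> for all \<open>k < T\<close>.\<close>
  have attV: "\<forall>k<T. \<forall>x. \<exists>u\<in>structured_inputs. \<forall>v. V k (A x + B u) \<le> V k (A x + B v)"
  proof (intro allI impI)
    fix k x assume "k < T"
    then have t: "T - Suc k < T" and steps_left: "Jstar A B g T (Suc (T - Suc k)) = V k"
      by (auto simp: Jstar_def)
    obtain u where "u \<in> structured_inputs"
      and "\<forall>v. Jstar A B g T (Suc (T - Suc k)) (A x + B u) \<le> Jstar A B g T (Suc (T - Suc k)) (A x + B v)"
      using hyp[rule_format, OF t, of x] unfolding structured_inputs_def by blast
    then show "\<exists>u\<in>structured_inputs. \<forall>v. V k (A x + B u) \<le> V k (A x + B v)"
      unfolding steps_left by blast
  qed
  have attW: "\<forall>k<T. \<forall>j\<in>I. \<forall>z\<in>Xs j. \<exists>u\<in>E j. \<forall>v\<in>E j. W j k (A z + B u) \<le> W j k (A z + B v)"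
  proof (intro allI impI ballI)
    fix k j z assume "k < T" "j \<in> I" "z \<in> Xs j"
    then have t: "T - Suc k < T" and steps_left: "Jbar A B g (Xs j) T (Suc (T - Suc k)) = W j k"
      by (auto simp: Jbar_def)
    show "\<exists>u\<in>E j. \<forall>v\<in>E j. W j k (A z + B u) \<le> W j k (A z + B v)"
      using attJbar[rule_format, OF \<open>j \<in> I\<close> t \<open>z \<in> Xs j\<close>] unfolding steps_left .
  qed
  show ?thesis
    unfolding Jstar_def Jbar_def using restriction[OF attV attW] by auto
qed

end
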